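(* Let $\mathfrak{H}$ be a Euclidean space and let $(\mathcal{X},\mathsf{S},\gamma,(\Lambda_{a})_{a\in\mathcal{A}})$ be a spectral decomposition system for $\mathfrak{H}$ such that the set $\{\Lambda_a\}_{a\in\mathcal{A}}$ is closed in $\mathscr{L}(\mathcal{X},\mathfrak{H})$. Let $\varphi\colon\mathcal{X}\to[-\infty,+\infty]$ be $\mathsf{S}$-invariant and let $X\in\mathfrak{H}$. Then: (i) $\partial_{\mathsf{F}}(\varphi\circ\gamma)(X)=\{\Lambda_a y: y\in\partial_{\mathsf{F}}\varphi(\gamma(X))\ \text{and}\ a\in\mathcal{A}_X\}$; (ii) $\partial_{\mathsf{L}}(\varphi\circ\gamma)(X)=\{\Lambda_a y: y\in\partial_{\mathsf{L}}\varphi(\gamma(X))\ \text{and}\ a\in\mathcal{A}_X\}$.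
   Context: A Euclidean space is a finite-dimensional real Hilbert space; $\mathscr{L}(\mathcal{X},\mathfrak{H})$ carries the operator-norm topology. A spectral decomposition system for a Euclidean space $\mathfrak{H}$ is a tuple $(\mathcal{X},\mathsf{S},\gamma,(\Lambda_a)_{a\in\mathcal{A}})$ where $\mathcal{X}$ is a Euclidean space, $\mathsf{S}$ is a group acting on $\mathcal{X}$ such that each map $x\mapsto \mathsf{s}\cdot x$ is a linear isometry, $\gamma\colon\mathfrak{H}\to\mathcal{X}$ is a mapping, and each $\Lambda_a\colon\mathcal{X}\to\mathfrak{H}$ is a linear isometry, such that: [A] there exists a mapping $\tau\colon\mathcal{X}\to\mathcal{X}$ with $\tau(\mathsf{s}\cdot x)=\tau(x)$ for all $\mathsf{s},x$, $\tau(x)\in\mathsf{S}\cdot x$ for all $x$, and $\gamma\circ\Lambda_a=\tau$ for all $a\in\mathcal{A}$; [B] for every $X\in\mathfrak{H}$ there exists $a\in\mathcal{A}$ with $X=\Lambda_a\gamma(X)$; [C] $\langle X,Y\rangle\le\langle\gamma(X),\gamma(Y)\rangle$ for all $X,Y\in\mathfrak{H}$. $\mathcal{A}_X=\{a\in\mathcal{A}:X=\Lambda_a\gamma(X)\}$. A function $\varphi$ on $\mathcal{X}$ is $\mathsf{S}$-invariant if $\varphi(\mathsf{s}\cdot x)=\varphi(x)$ for all $\mathsf{s}\in\mathsf{S}$, $x\in\mathcal{X}$. For $f\colon\mathcal{H}\to[-\infty,+\infty]$ on a Euclidean space $\mathcal{H}$: the Fréchet subdifferential is $\partial_{\mathsf{F}}f(x)=\{y:\liminf_{z\to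 x,z\ne x}(f(z)-f(x)-\langle z-x,y\rangle)/\|z-x\|\ge0\}$ if $f(x)\in\mathbb{R}$ and $\varnothing$ otherwise; the limiting subdifferential $\partial_{\mathsf{L}}f(x)$, for $f(x)\in\mathbb{R}$, is the set of $y$ for which there exist $x_n\to x$ with $f(x_n)\to f(x)$ and $y_n\to y$ with $y_n\in\partial_{\mathsf{F}}f(x_n)$, and $\partial_{\mathsf{L}}f(x)=\varnothing$ if $f(x)\in\{\pm\infty\}$. *)

theory Defs
  imports "HOL-Analysis.Analysis" "HOL-Algebra.Group"
begin

definition frechet_subdiff :: "('a::euclidean_space \<Rightarrow> ereal) \<Rightarrow> 'a \<Rightarrow> 'a set" where
  "frechet_subdiff f x =
     (if \<bar>f x\<bar> \<noteq> \<infinity> then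
        {y. Liminf (at x) (\<lambda>z. (f z - f x - ereal (inner (z - x) y)) / ereal (norm (z - x))) \<ge> 0}
      else {})"

definition limiting_subdiff :: "('a::euclidean_space \<Rightarrow> ereal) \<Rightarrow> 'a \<Rightarrow> 'a set" where
  "limiting_subdiff f x =
     (if \<bar>f x\<bar> \<noteq> \<infinity> then
        {y. \<exists>xs ys. xs \<longlonglongrightarrow> x \<and> (\<lambda>n. f (xs n)) \<longlonglongrightarrow> f x \<and> ys \<longlonglongrightarrow> y
              \<and> (\<forall>n. ys n \<in> frechet_subdiff f (xs n))}
      else {})"

definition linear_isometry :: "('a::real_normed_vector \<Rightarrow> 'b::real_normed_vector) \<Rightarrow> bool" where
  "linear_isometry L \<longleftrightarrow> linear L \<and> (\<forall>x. norm (L x) = norm x)"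

definition isometric_group_action ::
  "('s, 'm) monoid_scheme \<Rightarrow> ('s \<Rightarrow> 'x::euclidean_space \<Rightarrow> 'x) \<Rightarrow> bool" where
  "isometric_group_action G act \<longleftrightarrow>
     group G \<and> (\<forall>x. act \<one>\<^bsub>G\<^esub> x = x)
     \<and> (\<forall>s\<in>carrier G. \<forall>t\<in>carrier G. \<forall>x. act (s \<otimes>\<^bsub>G\<^esub> t) x = act s (act t x))
     \<and> (\<forall>s\<in>carrier G. linear_isometry (act s))"

definition spectral_decomposition_system ::
  "('s, 'm) monoid_scheme \<Rightarrow> ('s \<Rightarrow> 'x::euclidean_space \<Rightarrow> 'x) \<Rightarrow> ('h::euclidean_space \<Rightarrow> 'x)
    \<Rightarrow> 'i set \<Rightarrow> ('i \<Rightarrow> 'x \<Rightarrow> 'h) \<Rightarrow> bool" where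
  "spectral_decomposition_system G act \<gamma> A \<Lambda> \<longleftrightarrow>
     isometric_group_action G act
     \<and> (\<forall>a\<in>A. linear_isometry (\<Lambda> a))
     \<and> (\<exists>\<tau>. (\<forall>s\<in>carrier G. \<forall>x. \<tau> (act s x) = \<tau> x)
            \<and> (\<forall>x. \<exists>s\<in>carrier G. \<tau> x = act s x)
            \<and> (\<forall>a\<in>A. \<gamma> \<circ> \<Lambda> a = \<tau>))
     \<and> (\<forall>X. \<exists>a\<in>A. X = \<Lambda> a (\<gamma> X))
     \<and> (\<forall>X Y. inner X Y \<le> inner (\<gamma> X) (\<gamma> Y))"

definition index_set_at :: "'i set \<Rightarrow> ('i \<Rightarrow> 'x \<Rightarrow> 'h) \<Rightarrow> ('h \<Rightarrow> 'x) \<Rightarrow> 'h \<Rightarrow> 'i set" where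
  "index_set_at A \<Lambda> \<gamma> X = {a\<in>A. X = \<Lambda> a (\<gamma> X)}"

definition S_invariant :: "('s, 'm) monoid_scheme \<Rightarrow> ('s \<Rightarrow> 'x \<Rightarrow> 'x) \<Rightarrow> ('x \<Rightarrow> 'c) \<Rightarrow> bool" where
  "S_invariant G act \<phi> \<longleftrightarrow> (\<forall>s\<in>carrier G. \<forall>x. \<phi> (act s x) = \<phi> x)"

end

theory Submission
  imports Defs
begin

text \<open>
  Write \<open>\<psi> = \<phi> \<circ> \<gamma>\<close>. Since \<open>\<gamma> \<circ> \<Lambda>\<^sub>a = \<tau>\<close> maps every point into its own orbit and
  \<open>\<phi>\<close> is invariant, \<open>\<psi> \<circ> \<Lambda>\<^sub>a = \<phi>\<close>; as \<open>\<Lambda>\<^sub>a\<close> is a linear isometry, \<open>\<Lambda>\<^sub>a y \<in> \<partial>\<psi>(\<Lambda>\<^sub>a x)\<close>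
  implies \<open>y \<in> \<partial>\<phi>(x)\<close>.

  Conversely, let \<open>y \<in> \<partial>\<phi>(x)\<close> and let \<open>Z\<close> be close to \<open>\<Lambda>\<^sub>a x\<close>. Put \<open>t = |Z - \<Lambda>\<^sub>a x| / e\<close> and
  choose \<open>s\<close> with \<open>\<tau>(x + t y) = s \<cdot> (x + t y)\<close>. The inequality
  \<open>\<langle>X, Y\<rangle> \<le> \<langle>\<gamma> X, \<gamma> Y\<rangle>\<close>, applied to \<open>Z\<close> and \<open>\<Lambda>\<^sub>a (x + t y)\<close>, shows that the point
  \<open>w = s\<inverse> \<cdot> \<gamma> Z\<close> of the orbit of \<open>\<gamma> Z\<close> satisfies
  \<open>\<langle>w - x, y\<rangle> \<ge> \<langle>Z - \<Lambda>\<^sub>a x, \<Lambda>\<^sub>a y\<rangle> - e |Z - \<Lambda>\<^sub>a x| / 2\<close> and \<open>|w - x| = O(|Z - \<Lambda>\<^sub>a x|)\<close>;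
  since \<open>\<psi> Z = \<phi> w\<close>, the Frechet inequality for \<open>\<phi>\<close> at \<open>x\<close> transfers to \<open>\<psi>\<close> at \<open>\<Lambda>\<^sub>a x\<close>.

  Finally let \<open>Y \<in> \<partial>\<psi>(X)\<close> and decompose \<open>X + t Y = \<Lambda>\<^bsub>c t\<^esub> (\<gamma> (X + t Y))\<close>. The points
  \<open>\<Lambda>\<^bsub>c t\<^esub> (\<gamma> X)\<close> have the same \<open>\<psi>\<close>-value as \<open>X\<close> and lie at distance \<open>d\<close> with
  \<open>d\<^sup>2 \<le> 2 t \<langle>\<Lambda>\<^bsub>c t\<^esub> (\<gamma> X) - X, Y\<rangle>\<close>, so the Frechet inequality at \<open>X\<close> forces \<open>d = o(t)\<close>.
  Hence \<open>Y\<close> is the limit of \<open>\<Lambda>\<^bsub>c t\<^esub>\<close> applied to the bounded difference quotients of \<open>\<gamma>\<close>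
  along \<open>X + t Y\<close>; the closed, bounded and therefore compact family \<open>{\<Lambda>\<^sub>a}\<close> yields a
  limit index \<open>a \<in> A\<^sub>X\<close> with \<open>Y \<in> \<Lambda>\<^sub>a \<partial>\<phi>(\<gamma> X)\<close>. The limiting subdifferential is handled by
  running these arguments along the approximating sequences.
\<close>

section \<open>Frechet and limiting subdifferentials\<close>

lemma frechet_subdiff_finite:
  assumes "y \<in> frechet_subdiff f x"
  obtains v where "f x = ereal v"
  using assms unfolding frechet_subdiff_def by (cases "f x") (auto split: if_splits)

lemma frechet_quotient_gt_iff:
  fixes f :: "'a::euclidean_space \<Rightarrow> ereal"
  assumes "f x = ereal v" "z \<noteq> x"
  shows "ereal (- e) < (f z - f x - ereal (inner (z - x) y)) / ereal (norm (z - x))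
     \<longleftrightarrow> ereal (v + inner (z - x) y - e * norm (z - x)) < f z"
proof (cases "f z")
  case (real w)
  have "norm (z - x) > 0" using assms(2) by simp
  then show ?thesis using assms(1) real by (simp add: field_simps)
qed (use assms in simp_all)

lemma all_neg_ereal_eventually_iff:
  "(\<forall>c<0. \<forall>\<^sub>F z in F. c < g z) \<longleftrightarrow> (\<forall>e>0. \<forall>\<^sub>F z in F. ereal (- e) < g z)"
proof
  assume "\<forall>c<0. \<forall>\<^sub>F z in F. c < g z"
  then show "\<forall>e>0. \<forall>\<^sub>F z in F. ereal (- e) < g z"
    by simp
next
  assume ev: "\<forall>e>0. \<forall>\<^sub>F z in F. ereal (- e) < g z"
  show "\<forall>c<0. \<forall>\<^sub>F z in F. c < g z"
  proof (intro allI impI)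
    fix c :: ereal assume c: "c < 0"
    obtain e where e: "e > 0" and ce: "c \<le> ereal (- e)"
    proof (cases c)
      case (real r)
      then show ?thesis using c that[of "- r"] by simp
    next
      case MInf
      then show ?thesis using that[of 1] by simp
    qed (use c in simp)
    from ev e have "\<forall>\<^sub>F z in F. ereal (- e) < g z" by blast
    then show "\<forall>\<^sub>F z in F. c < g z"
      by (rule eventually_mono) (use ce in simp)
  qed
qed

lemma frechet_subdiff_iff_eventually:
  fixes f :: "'a::euclidean_space \<Rightarrow> ereal"
  assumes fx: "f x = ereal v"
  shows "y \<in> frechet_subdiff f x \<longleftrightarrow>
    (\<forall>e>0. \<forall>\<^sub>F z in at x. ereal (v + inner (z - x) y - e * norm (z - x)) < f z)"
proof -
  let ?g = "\<lambda>z. (f z - f x - ereal (inner (z - x) y)) / ereal (norm (z - x))"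
  have "y \<in> frechet_subdiff f x \<longleftrightarrow> (\<forall>e>0. \<forall>\<^sub>F z in at x. ereal (- e) < ?g z)"
    using fx by (simp add: frechet_subdiff_def le_Liminf_iff all_neg_ereal_eventually_iff)
  also have "\<dots> \<longleftrightarrow> (\<forall>e>0. \<forall>\<^sub>F z in at x. ereal (v + inner (z - x) y - e * norm (z - x)) < f z)"
    by (simp add: eventually_at_filter frechet_quotient_gt_iff[of f x v, OF fx])
  finally show ?thesis .
qed

lemma frechet_subdiff_iff:
  fixes f :: "'a::euclidean_space \<Rightarrow> ereal"
  assumes fx: "f x = ereal v"
  shows "y \<in> frechet_subdiff f x \<longleftrightarrow>
    (\<forall>e>0. \<exists>r>0. \<forall>z. norm (z - x) < r \<longrightarrow> ereal (v + inner (z - x) y - e * norm (z - x)) \<le> f z)"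
  unfolding frechet_subdiff_iff_eventually[of f x v, OF fx]
proof (intro iffI allI impI)
  fix e :: real
  assume ev: "\<forall>e>0. \<forall>\<^sub>F z in at x. ereal (v + inner (z - x) y - e * norm (z - x)) < f z"
    and e: "e > 0"
  then obtain r where r: "r > 0"
    and near: "\<And>z. z \<noteq> x \<Longrightarrow> dist z x < r \<Longrightarrow> ereal (v + inner (z - x) y - e * norm (z - x)) < f z"
    unfolding eventually_at by blast
  show "\<exists>r>0. \<forall>z. norm (z - x) < r \<longrightarrow> ereal (v + inner (z - x) y - e * norm (z - x)) \<le> f z"
  proof (intro exI[of _ r] conjI allI impI)
    fix z assume "norm (z - x) < r"
    then show "ereal (v + inner (z - x) y - e * norm (z - x)) \<le> f z"
      using near[of z] fx by (cases "z = x") (auto simp: dist_norm)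
  qed (rule r)
next
  fix e :: real
  assume R: "\<forall>e>0. \<exists>r>0. \<forall>z. norm (z - x) < r \<longrightarrow> ereal (v + inner (z - x) y - e * norm (z - x)) \<le> f z"
    and e: "e > 0"
  then obtain r where r: "r > 0"
    and near: "\<And>z. norm (z - x) < r \<Longrightarrow> ereal (v + inner (z - x) y - e / 2 * norm (z - x)) \<le> f z"
    by (meson half_gt_zero)
  show "\<forall>\<^sub>F z in at x. ereal (v + inner (z - x) y - e * norm (z - x)) < f z"
    unfolding eventually_at
  proof (intro exI[of _ r] conjI ballI impI)
    fix z assume z: "z \<noteq> x \<and> dist z x < r"
    have "ereal (v + inner (z - x) y - e * norm (z - x)) < ereal (v + inner (z - x) y - e / 2 * norm (z - x))"
      using z e by simp
    also have "\<dots> \<le> f z"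
      using near z by (simp add: dist_norm)
    finally show "ereal (v + inner (z - x) y - e * norm (z - x)) < f z" .
  qed (fact r)
qed

lemma limiting_subdiffI:
  assumes "\<bar>f x\<bar> \<noteq> \<infinity>" "xs \<longlonglongrightarrow> x" "(\<lambda>n. f (xs n)) \<longlonglongrightarrow> f x" "ys \<longlonglongrightarrow> y"
    and "\<And>n. ys n \<in> frechet_subdiff f (xs n)"
  shows "y \<in> limiting_subdiff f x"
proof -
  have "\<exists>xs ys. xs \<longlonglongrightarrow> x \<and> (\<lambda>n. f (xs n)) \<longlonglongrightarrow> f x \<and> ys \<longlonglongrightarrow> y
      \<and> (\<forall>n. ys n \<in> frechet_subdiff f (xs n))"
    using assms by blast
  then show ?thesis
    using assms(1) by (simp add: limiting_subdiff_def)
qed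

lemma limiting_subdiffE:
  assumes "y \<in> limiting_subdiff f x"
  obtains xs ys where "\<bar>f x\<bar> \<noteq> \<infinity>" "xs \<longlonglongrightarrow> x" "(\<lambda>n. f (xs n)) \<longlonglongrightarrow> f x" "ys \<longlonglongrightarrow> y"
    and "\<And>n. ys n \<in> frechet_subdiff f (xs n)"
  using assms unfolding limiting_subdiff_def by (auto split: if_splits)

section \<open>Linear isometries\<close>

lemma linear_isometry_linear: "linear_isometry L \<Longrightarrow> linear L"
  and linear_isometry_norm: "linear_isometry L \<Longrightarrow> norm (L x) = norm x"
  unfolding linear_isometry_def by auto

lemma linear_isometry_inner:
  fixes L :: "'a::real_inner \<Rightarrow> 'b::real_inner"
  assumes "linear_isometry L"
  shows "inner (L u) (L v) = inner u v"
  using assms by (simp add: dot_norm linear_isometry_norm linear_add[OF linear_isometry_linear, symmetric])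

lemma linear_isometry_diff:
  assumes "linear_isometry L"
  shows "L u - L v = L (u - v)"
  using assms by (simp add: linear_isometry_linear linear_diff)

lemma linear_isometry_blinfun:
  fixes L :: "'a::euclidean_space \<Rightarrow> 'b::real_normed_vector"
  assumes "linear_isometry L"
  shows "blinfun_apply (Blinfun L) = L" "norm (Blinfun L) \<le> 1"
proof -
  show L: "blinfun_apply (Blinfun L) = L"
    using linear_isometry_linear[OF assms] linear_conv_bounded_linear bounded_linear_Blinfun_apply by blast
  show "norm (Blinfun L) \<le> 1"
    by (rule norm_blinfun_bound) (simp_all add: L linear_isometry_norm[OF assms])
qed

lemma frechet_subdiff_comp_linear_isometry:
  assumes L: "linear_isometry L" and y: "L y \<in> frechet_subdiff g (L x)"
  shows "y \<in> frechet_subdiff (g \<circ> L) x"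
proof -
  obtain v where v: "g (L x) = ereal v"
    using y by (rule frechet_subdiff_finite)
  have diff: "norm (L z - L x) = norm (z - x)" "inner (L z - L x) (L y) = inner (z - x) y" for z
    by (simp_all add: linear_isometry_diff[OF L] linear_isometry_norm[OF L] linear_isometry_inner[OF L])
  have v': "(g \<circ> L) x = ereal v"
    using v by simp
  show ?thesis
    unfolding frechet_subdiff_iff[of "g \<circ> L" x v, OF v']
  proof (intro allI impI)
    fix e :: real assume "e > 0"
    then obtain r where "r > 0"
      and near: "\<And>z. norm (z - L x) < r \<Longrightarrow> ereal (v + inner (z - L x) (L y) - e * norm (z - L x)) \<le> g z"
      using y unfolding frechet_subdiff_iff[of g "L x" v, OF v] by blast
    moreover have "ereal (v + inner (z - x) y - e * norm (z - x)) \<le> (g \<circ> L) z" if "norm (z - x) < r" for z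
      using near[of "L z"] that by (simp add: diff)
    ultimately show "\<exists>r>0. \<forall>z. norm (z - x) < r \<longrightarrow> ereal (v + inner (z - x) y - e * norm (z - x)) \<le> (g \<circ> L) z"
      by blast
  qed
qed

section \<open>Spectral decomposition systems\<close>

lemma square_le_mult_imp_le:
  fixes d k :: real
  assumes "d\<^sup>2 \<le> k * d" "0 \<le> k"
  shows "d \<le> k"
proof (cases "d > 0")
  case True
  then show ?thesis
    using assms(1) by (simp add: power2_eq_square mult_le_cancel_right_pos)
qed (use assms(2) in simp)

locale spectral_decomposition =
  fixes G :: "('s, 'm) monoid_scheme" and act :: "'s \<Rightarrow> 'x::euclidean_space \<Rightarrow> 'x"
    and \<gamma> :: "'h::euclidean_space \<Rightarrow> 'x" and A :: "'i set" and \<Lambda> :: "'i \<Rightarrow> 'x \<Rightarrow> 'h"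
    and \<tau> :: "'x \<Rightarrow> 'x"
  assumes group: "group G"
    and act_one: "act \<one>\<^bsub>G\<^esub> x = x"
    and act_mult: "s \<in> carrier G \<Longrightarrow> t \<in> carrier G \<Longrightarrow> act (s \<otimes>\<^bsub>G\<^esub> t) x = act s (act t x)"
    and act_isometry: "s \<in> carrier G \<Longrightarrow> linear_isometry (act s)"
    and Lambda_isometry: "a \<in> A \<Longrightarrow> linear_isometry (\<Lambda> a)"
    and tau_act: "s \<in> carrier G \<Longrightarrow> \<tau> (act s x) = \<tau> x"
    and tau_orbit: "\<exists>s\<in>carrier G. \<tau> x = act s x"
    and gamma_Lambda: "a \<in> A \<Longrightarrow> \<gamma> (\<Lambda> a x) = \<tau> x"
    and Lambda_gamma: "\<exists>a\<in>A. X = \<Lambda> a (\<gamma> X)"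
    and inner_le_gamma: "inner X Y \<le> inner (\<gamma> X) (\<gamma> Y)"

lemma spectral_decomposition_systemE:
  assumes sds: "spectral_decomposition_system G act \<gamma> A \<Lambda>"
  obtains \<tau> where "spectral_decomposition G act \<gamma> A \<Lambda> \<tau>"
proof -
  from sds obtain \<tau> where "\<forall>s\<in>carrier G. \<forall>x. \<tau> (act s x) = \<tau> x"
      "\<forall>x. \<exists>s\<in>carrier G. \<tau> x = act s x" and comp: "\<forall>a\<in>A. \<gamma> \<circ> \<Lambda> a = \<tau>"
    unfolding spectral_decomposition_system_def by blast
  moreover from comp have "\<forall>a\<in>A. \<forall>x. \<gamma> (\<Lambda> a x) = \<tau> x"
    by (simp add: fun_eq_iff)
  ultimately have "spectral_decomposition G act \<gamma> A \<Lambda> \<tau>"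
    using sds unfolding spectral_decomposition_def spectral_decomposition_system_def
      isometric_group_action_def by blast
  then show thesis
    by (rule that)
qed

context spectral_decomposition
begin

lemma act_inv_cancel: "s \<in> carrier G \<Longrightarrow> act s (act (inv\<^bsub>G\<^esub> s) x) = x"
  using act_mult[of s "inv\<^bsub>G\<^esub> s" x] by (simp add: group.r_inv[OF group] group.inv_closed[OF group] act_one)

lemma Lambda_linear: "a \<in> A \<Longrightarrow> linear (\<Lambda> a)"
  by (rule linear_isometry_linear[OF Lambda_isometry])

lemma norm_Lambda: "a \<in> A \<Longrightarrow> norm (\<Lambda> a x) = norm x"
  by (rule linear_isometry_norm[OF Lambda_isometry])

lemma inner_Lambda: "a \<in> A \<Longrightarrow> inner (\<Lambda> a u) (\<Lambda> a v) = inner u v"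
  by (rule linear_isometry_inner[OF Lambda_isometry])

lemma norm_gamma: "norm (\<gamma> X) = norm X"
proof -
  obtain a where a: "a \<in> A" "X = \<Lambda> a (\<gamma> X)"
    using Lambda_gamma by blast
  from a(2) have "norm X = norm (\<Lambda> a (\<gamma> X))"
    by (rule arg_cong)
  also have "\<dots> = norm (\<gamma> X)"
    by (rule norm_Lambda[OF a(1)])
  finally show ?thesis
    by (rule sym)
qed

lemma gamma_lipschitz: "norm (\<gamma> X - \<gamma> Y) \<le> norm (X - Y)"
proof -
  have "(norm (\<gamma> X - \<gamma> Y))\<^sup>2 \<le> (norm (X - Y))\<^sup>2"
    using inner_le_gamma[of X Y] unfolding dot_norm_neg by (simp add: norm_gamma)
  then show ?thesis
    by (rule power2_le_imp_le) simp
qed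

lemma tendsto_gamma: "(f \<longlongrightarrow> l) F \<Longrightarrow> ((\<lambda>n. \<gamma> (f n)) \<longlongrightarrow> \<gamma> l) F"
  by (erule metric_tendsto_imp_tendsto) (simp add: dist_norm gamma_lipschitz)

lemma tau_gamma: "\<tau> (\<gamma> X) = \<gamma> X"
proof -
  obtain a where a: "a \<in> A" "X = \<Lambda> a (\<gamma> X)"
    using Lambda_gamma by blast
  from a(2) have "\<gamma> X = \<gamma> (\<Lambda> a (\<gamma> X))"
    by (rule arg_cong)
  also have "\<dots> = \<tau> (\<gamma> X)"
    by (rule gamma_Lambda[OF a(1)])
  finally show ?thesis
    by (rule sym)
qed

lemma inner_le_tau: "inner u v \<le> inner (\<tau> u) (\<tau> v)"
proof -
  obtain a where a: "a \<in> A"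
    using Lambda_gamma by blast
  have "inner u v = inner (\<Lambda> a u) (\<Lambda> a v)"
    by (simp add: inner_Lambda[OF a])
  also have "\<dots> \<le> inner (\<gamma> (\<Lambda> a u)) (\<gamma> (\<Lambda> a v))"
    by (rule inner_le_gamma)
  finally show ?thesis
    by (simp add: gamma_Lambda[OF a])
qed

lemma tau_lipschitz: "norm (\<tau> u - \<tau> v) \<le> norm (u - v)"
proof -
  obtain a where a: "a \<in> A"
    using Lambda_gamma by blast
  have "norm (\<tau> u - \<tau> v) = norm (\<gamma> (\<Lambda> a u) - \<gamma> (\<Lambda> a v))"
    by (simp add: gamma_Lambda[OF a])
  also have "\<dots> \<le> norm (\<Lambda> a u - \<Lambda> a v)"
    by (rule gamma_lipschitz)
  finally show ?thesis
    by (simp add: linear_isometry_diff[OF Lambda_isometry[OF a]] norm_Lambda[OF a])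
qed

lemma inner_gamma_gap: "inner (\<gamma> Z) (\<gamma> X) - inner Z X \<le> (norm (Z - X))\<^sup>2 / 2"
proof -
  have "inner (\<gamma> Z) (\<gamma> X) - inner Z X = ((norm (Z - X))\<^sup>2 - (norm (\<gamma> Z - \<gamma> X))\<^sup>2) / 2"
    unfolding dot_norm_neg by (simp add: norm_gamma field_simps)
  then show ?thesis
    by simp
qed

lemma Lambda_gamma_gap:
  assumes c: "c \<in> A" and X': "X' = \<Lambda> c (\<gamma> X')"
  shows "(norm (\<Lambda> c (\<gamma> X) - X))\<^sup>2 / 2 \<le> inner (\<Lambda> c (\<gamma> X) - X) (X' - X)"
proof -
  define Z where "Z = \<Lambda> c (\<gamma> X)"
  have "inner Z X' = inner (\<gamma> X) (\<gamma> X')"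
    unfolding Z_def by (subst X') (rule inner_Lambda[OF c])
  then have ZX': "inner X X' \<le> inner Z X'"
    using inner_le_gamma[of X X'] by simp
  have "norm Z = norm X"
    by (simp add: Z_def norm_Lambda[OF c] norm_gamma)
  then have "(norm (Z - X))\<^sup>2 / 2 = inner X X - inner Z X"
    using dot_norm_neg[of Z X] by (simp add: power2_norm_eq_inner)
  moreover have "inner (Z - X) (X' - X) = inner Z X' - inner X X' - inner Z X + inner X X"
    by (simp add: inner_diff_left inner_diff_right inner_commute)
  ultimately show ?thesis
    using ZX' by (simp add: Z_def)
qed

lemma Lambda_gamma_shift_le:
  assumes c: "c \<in> A" and t: "t \<ge> 0" and dec: "X + t *\<^sub>R Y = \<Lambda> c (\<gamma> (X + t *\<^sub>R Y))"
  shows "(norm (\<Lambda> c (\<gamma> X) - X))\<^sup>2 \<le> 2 * t * inner (\<Lambda> c (\<gamma> X) - X) Y"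
    and "norm (\<Lambda> c (\<gamma> X) - X) \<le> 2 * t * norm Y"
proof -
  define d where "d = norm (\<Lambda> c (\<gamma> X) - X)"
  show gap: "(norm (\<Lambda> c (\<gamma> X) - X))\<^sup>2 \<le> 2 * t * inner (\<Lambda> c (\<gamma> X) - X) Y"
    using Lambda_gamma_gap[OF c dec, of X] by simp
  have "t * inner (\<Lambda> c (\<gamma> X) - X) Y \<le> t * (d * norm Y)"
    unfolding d_def using t by (simp add: mult_left_mono norm_cauchy_schwarz)
  with gap have "d\<^sup>2 \<le> (2 * t * norm Y) * d"
    by (simp add: d_def mult_ac)
  then show "norm (\<Lambda> c (\<gamma> X) - X) \<le> 2 * t * norm Y"
    unfolding d_def by (rule square_le_mult_imp_le) (use t in simp)
qed

lemma Lambda_difference_quotient: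
  assumes c: "c \<in> A" and t: "t \<noteq> 0" and dec: "X + t *\<^sub>R Y = \<Lambda> c (\<gamma> (X + t *\<^sub>R Y))"
  shows "norm (\<Lambda> c (inverse t *\<^sub>R (\<gamma> (X + t *\<^sub>R Y) - \<gamma> X)) - Y) = norm (\<Lambda> c (\<gamma> X) - X) / \<bar>t\<bar>"
proof -
  have "\<Lambda> c (inverse t *\<^sub>R (\<gamma> (X + t *\<^sub>R Y) - \<gamma> X)) = inverse t *\<^sub>R (X + t *\<^sub>R Y - \<Lambda> c (\<gamma> X))"
    by (simp add: linear_scale[OF Lambda_linear[OF c]] linear_diff[OF Lambda_linear[OF c]] dec[symmetric])
  also have "\<dots> = Y - inverse t *\<^sub>R (\<Lambda> c (\<gamma> X) - X)"
    using t by (simp add: algebra_simps)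
  finally show ?thesis
    by (simp add: norm_minus_commute divide_inverse_commute)
qed

lemma orbit_inner_estimate:
  assumes a: "a \<in> A" and s: "s \<in> carrier G"
    and tau_s: "\<tau> (x + t *\<^sub>R y) = act s (x + t *\<^sub>R y)" and w: "act s w = \<gamma> Z"
  shows "t * inner (Z - \<Lambda> a x) (\<Lambda> a y) - (norm (Z - \<Lambda> a x))\<^sup>2 / 2 \<le> t * inner (w - x) y"
proof -
  have s_lin: "linear (act s)"
    by (rule linear_isometry_linear[OF act_isometry[OF s]])
  have tau_xy: "\<tau> (x + t *\<^sub>R y) = act s x + t *\<^sub>R act s y"
    using tau_s by (simp add: linear_add[OF s_lin] linear_scale[OF s_lin])
  have "t * inner (w - x) y = inner (act s w - act s x) (t *\<^sub>R act s y)"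
    by (simp add: linear_diff[OF s_lin, symmetric] linear_isometry_inner[OF act_isometry[OF s]])
  also have "\<dots> = inner (\<gamma> Z) (\<tau> (x + t *\<^sub>R y)) - inner (\<gamma> Z) (act s x) - t * inner x y"
    by (simp add: w tau_xy inner_diff_left inner_add_right right_diff_distrib
        linear_isometry_inner[OF act_isometry[OF s]])
  finally have eq: "t * inner (w - x) y = \<dots>" .
  have "inner Z (\<Lambda> a (x + t *\<^sub>R y)) \<le> inner (\<gamma> Z) (\<tau> (x + t *\<^sub>R y))"
    using inner_le_gamma[of Z "\<Lambda> a (x + t *\<^sub>R y)"] by (simp only: gamma_Lambda[OF a])
  moreover have "inner Z (\<Lambda> a (x + t *\<^sub>R y)) = inner Z (\<Lambda> a x) + t * inner Z (\<Lambda> a y)"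
    by (simp add: linear_add[OF Lambda_linear[OF a]] linear_scale[OF Lambda_linear[OF a]] inner_add_right)
  ultimately have up: "inner Z (\<Lambda> a x) + t * inner Z (\<Lambda> a y) \<le> inner (\<gamma> Z) (\<tau> (x + t *\<^sub>R y))"
    by simp
  have down: "inner (\<gamma> Z) (act s x) \<le> inner (\<gamma> Z) (\<gamma> (\<Lambda> a x))"
    using inner_le_tau[of "\<gamma> Z" "act s x"] by (simp add: tau_gamma tau_act[OF s] gamma_Lambda[OF a])
  have gap: "inner (\<gamma> Z) (\<gamma> (\<Lambda> a x)) - inner Z (\<Lambda> a x) \<le> (norm (Z - \<Lambda> a x))\<^sup>2 / 2"
    by (rule inner_gamma_gap)
  have "t * inner (Z - \<Lambda> a x) (\<Lambda> a y) = t * inner Z (\<Lambda> a y) - t * inner x y"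
    by (simp add: inner_diff_left right_diff_distrib inner_Lambda[OF a])
  then show ?thesis
    using eq up down gap by linarith
qed

lemma orbit_norm_estimate:
  assumes a: "a \<in> A" and s: "s \<in> carrier G"
    and tau_s: "\<tau> (x + t *\<^sub>R y) = act s (x + t *\<^sub>R y)" and w: "act s w = \<gamma> Z"
  shows "norm (w - x) \<le> norm (Z - \<Lambda> a x) + 2 * \<bar>t\<bar> * norm y"
proof -
  have s_iso: "linear_isometry (act s)"
    by (rule act_isometry[OF s])
  have "norm (w - x) = norm (\<gamma> Z - act s x)"
    by (simp add: w[symmetric] linear_isometry_diff[OF s_iso] linear_isometry_norm[OF s_iso])
  also have "\<gamma> Z - act s x = (\<gamma> Z - \<tau> x) + (\<tau> x - \<tau> (x + t *\<^sub>R y)) + (\<tau> (x + t *\<^sub>R y) - act s x)"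
    by simp
  also have "norm \<dots> \<le> norm (\<gamma> Z - \<tau> x) + norm (\<tau> x - \<tau> (x + t *\<^sub>R y)) + norm (\<tau> (x + t *\<^sub>R y) - act s x)"
    by (rule order_trans[OF norm_triangle_ineq add_right_mono[OF norm_triangle_ineq]])
  also have "\<dots> \<le> norm (Z - \<Lambda> a x) + \<bar>t\<bar> * norm y + \<bar>t\<bar> * norm y"
  proof (intro add_mono)
    show "norm (\<gamma> Z - \<tau> x) \<le> norm (Z - \<Lambda> a x)"
      using gamma_lipschitz[of Z "\<Lambda> a x"] by (simp add: gamma_Lambda[OF a])
    show "norm (\<tau> x - \<tau> (x + t *\<^sub>R y)) \<le> \<bar>t\<bar> * norm y"
      using tau_lipschitz[of x "x + t *\<^sub>R y"] by simp
    show "norm (\<tau> (x + t *\<^sub>R y) - act s x) \<le> \<bar>t\<bar> * norm y"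
      by (simp add: tau_s linear_isometry_diff[OF s_iso] linear_isometry_norm[OF s_iso])
  qed
  finally show ?thesis
    by simp
qed

lemma orbit_point_near:
  assumes a: "a \<in> A" and e: "e > 0" and Z: "Z \<noteq> \<Lambda> a x"
  obtains w where "\<exists>s\<in>carrier G. act s w = \<gamma> Z"
    "inner (Z - \<Lambda> a x) (\<Lambda> a y) - e * norm (Z - \<Lambda> a x) / 2 \<le> inner (w - x) y"
    "norm (w - x) \<le> norm (Z - \<Lambda> a x) * (1 + 2 * norm y / e)"
proof -
  define d where "d = norm (Z - \<Lambda> a x)"
  define t where "t = d / e"
  have t: "t > 0"
    using Z e by (simp add: t_def d_def)
  obtain s where s: "s \<in> carrier G" "\<tau> (x + t *\<^sub>R y) = act s (x + t *\<^sub>R y)"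
    using tau_orbit by blast
  define w where "w = act (inv\<^bsub>G\<^esub> s) (\<gamma> Z)"
  have w: "act s w = \<gamma> Z"
    by (simp add: w_def act_inv_cancel[OF s(1)])
  have "t * (inner (Z - \<Lambda> a x) (\<Lambda> a y) - e * d / 2) \<le> t * inner (w - x) y"
    using orbit_inner_estimate[OF a s w] t e
    by (simp add: d_def t_def power2_eq_square right_diff_distrib)
  then have "inner (Z - \<Lambda> a x) (\<Lambda> a y) - e * d / 2 \<le> inner (w - x) y"
    using t by simp
  moreover have "norm (w - x) \<le> d * (1 + 2 * norm y / e)"
    using orbit_norm_estimate[OF a s w] t e by (simp add: d_def t_def field_simps)
  ultimately show thesis
    using that s(1) w by (auto simp: d_def)
qed

lemma compact_Lambda:
  assumes "closed ((\<lambda>a. Blinfun (\<Lambda> a)) ` A)"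
  shows "compact ((\<lambda>a. Blinfun (\<Lambda> a)) ` A)"
proof -
  have "bounded ((\<lambda>a. Blinfun (\<Lambda> a)) ` A)"
    unfolding bounded_iff using linear_isometry_blinfun(2)[OF Lambda_isometry] by blast
  with assms show ?thesis
    by (simp add: compact_eq_bounded_closed)
qed

lemma tendsto_Lambda:
  assumes "\<And>n. c n \<in> A" "a \<in> A" "(\<lambda>n. Blinfun (\<Lambda> (c n))) \<longlonglongrightarrow> Blinfun (\<Lambda> a)" "u \<longlonglongrightarrow> y"
  shows "(\<lambda>n. \<Lambda> (c n) (u n)) \<longlonglongrightarrow> \<Lambda> a y"
  using blinfun.tendsto[OF assms(3,4)]
  by (simp add: linear_isometry_blinfun(1)[OF Lambda_isometry] assms(1,2))

lemma Lambda_decomposition_limit: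
  assumes cl: "closed ((\<lambda>a. Blinfun (\<Lambda> a)) ` A)"
    and c: "\<And>n. c n \<in> A" and dec: "\<And>n. xs n = \<Lambda> (c n) (\<gamma> (xs n))" and xs: "xs \<longlonglongrightarrow> X"
    and u: "\<And>n. norm (u n) \<le> B" and Y: "(\<lambda>n. \<Lambda> (c n) (u n)) \<longlonglongrightarrow> Y"
  obtains r a y where "strict_mono r" "a \<in> A" "X = \<Lambda> a (\<gamma> X)" "Y = \<Lambda> a y" "(\<lambda>n. u (r n)) \<longlonglongrightarrow> y"
proof -
  let ?K = "((\<lambda>a. Blinfun (\<Lambda> a)) ` A) \<times> cball (0::'x) B"
  have "seq_compact ?K"
    by (intro compact_imp_seq_compact compact_Times compact_Lambda[OF cl] compact_cball)
  moreover have "\<forall>n. (Blinfun (\<Lambda> (c n)), u n) \<in> ?K"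
    using c u by auto
  ultimately obtain l r where "l \<in> ?K" and r: "strict_mono r"
    and lim: "((\<lambda>n. (Blinfun (\<Lambda> (c n)), u n)) \<circ> r) \<longlonglongrightarrow> l"
    by (rule seq_compactE)
  then obtain a y where a: "a \<in> A" and l: "l = (Blinfun (\<Lambda> a), y)"
    by auto
  have LB: "(\<lambda>n. Blinfun (\<Lambda> (c (r n)))) \<longlonglongrightarrow> Blinfun (\<Lambda> a)"
    using tendsto_fst[OF lim] by (simp add: l o_def)
  have uy: "(\<lambda>n. u (r n)) \<longlonglongrightarrow> y"
    using tendsto_snd[OF lim] by (simp add: l o_def)
  have "(\<lambda>n. \<Lambda> (c (r n)) (u (r n))) \<longlonglongrightarrow> \<Lambda> a y"
    by (rule tendsto_Lambda[OF _ a LB uy]) (rule c)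
  moreover have "(\<lambda>n. \<Lambda> (c (r n)) (u (r n))) \<longlonglongrightarrow> Y"
    using LIMSEQ_subseq_LIMSEQ[OF Y r] by (simp add: o_def)
  ultimately have "Y = \<Lambda> a y"
    using LIMSEQ_unique by blast
  have xr: "(\<lambda>n. xs (r n)) \<longlonglongrightarrow> X"
    using LIMSEQ_subseq_LIMSEQ[OF xs r] by (simp add: o_def)
  have "(\<lambda>n. \<Lambda> (c (r n)) (\<gamma> (xs (r n)))) \<longlonglongrightarrow> \<Lambda> a (\<gamma> X)"
    by (rule tendsto_Lambda[OF _ a LB tendsto_gamma[OF xr]]) (rule c)
  then have "(\<lambda>n. xs (r n)) \<longlonglongrightarrow> \<Lambda> a (\<gamma> X)"
    by (simp only: dec[symmetric])
  with xr have "X = \<Lambda> a (\<gamma> X)"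
    using LIMSEQ_unique by blast
  then show thesis
    using that r a \<open>Y = \<Lambda> a y\<close> uy by blast
qed

end

section \<open>Subdifferentials of spectral functions\<close>

locale spectral_function = spectral_decomposition +
  fixes \<phi> :: "'x::euclidean_space \<Rightarrow> ereal"
  assumes phi_act: "s \<in> carrier G \<Longrightarrow> \<phi> (act s x) = \<phi> x"
begin

lemma phi_gamma_Lambda: "a \<in> A \<Longrightarrow> \<phi> (\<gamma> (\<Lambda> a x)) = \<phi> x"
  using gamma_Lambda tau_orbit phi_act by metis

lemma comp_gamma_lower_bound:
  assumes a: "a \<in> A" and e: "e > 0" and M: "M = 1 + 2 * norm y / e"
    and near: "\<And>w. norm (w - x) < r \<Longrightarrow> ereal (v + inner (w - x) y - e / (2 * M) * norm (w - x)) \<le> \<phi> w"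
    and Z: "Z \<noteq> \<Lambda> a x" "norm (Z - \<Lambda> a x) * M < r"
  shows "ereal (v + inner (Z - \<Lambda> a x) (\<Lambda> a y) - e * norm (Z - \<Lambda> a x)) \<le> (\<phi> \<circ> \<gamma>) Z"
proof -
  obtain w where orbit: "\<exists>s\<in>carrier G. act s w = \<gamma> Z"
    and ip: "inner (Z - \<Lambda> a x) (\<Lambda> a y) - e * norm (Z - \<Lambda> a x) / 2 \<le> inner (w - x) y"
    and nw: "norm (w - x) \<le> norm (Z - \<Lambda> a x) * M"
    using orbit_point_near[OF a e Z(1), of y] unfolding M by blast
  have M_ge: "M \<ge> 1"
    using e by (simp add: M)
  have "e / (2 * M) * norm (w - x) \<le> e * norm (Z - \<Lambda> a x) / 2"
    using mult_left_mono[OF nw, of "e / (2 * M)"] e M_ge by simp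
  with ip have "v + inner (Z - \<Lambda> a x) (\<Lambda> a y) - e * norm (Z - \<Lambda> a x)
      \<le> v + inner (w - x) y - e / (2 * M) * norm (w - x)"
    by linarith
  moreover have "ereal (v + inner (w - x) y - e / (2 * M) * norm (w - x)) \<le> \<phi> w"
    using nw Z(2) by (intro near) simp
  ultimately have "ereal (v + inner (Z - \<Lambda> a x) (\<Lambda> a y) - e * norm (Z - \<Lambda> a x)) \<le> \<phi> w"
    by (meson ereal_less_eq(3) order_trans)
  also have "\<phi> w = (\<phi> \<circ> \<gamma>) Z"
    using orbit phi_act by (metis comp_apply)
  finally show ?thesis .
qed

lemma frechet_subdiff_comp_gamma_Lambda:
  assumes a: "a \<in> A" and y: "y \<in> frechet_subdiff \<phi> x"
  shows "\<Lambda> a y \<in> frechet_subdiff (\<phi> \<circ> \<gamma>) (\<Lambda> a x)"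
proof -
  obtain v where v: "\<phi> x = ereal v"
    using y by (rule frechet_subdiff_finite)
  have vX: "(\<phi> \<circ> \<gamma>) (\<Lambda> a x) = ereal v"
    by (simp add: phi_gamma_Lambda[OF a] v)
  show ?thesis
    unfolding frechet_subdiff_iff[of "\<phi> \<circ> \<gamma>" "\<Lambda> a x" v, OF vX]
  proof (intro allI impI)
    fix e :: real assume e: "e > 0"
    define M where "M = 1 + 2 * norm y / e"
    have M: "M \<ge> 1"
      using e by (simp add: M_def)
    then have "e / (2 * M) > 0"
      using e by simp
    then obtain r where r: "r > 0" and near: "\<And>w. norm (w - x) < r \<Longrightarrow>
        ereal (v + inner (w - x) y - e / (2 * M) * norm (w - x)) \<le> \<phi> w"
      using y unfolding frechet_subdiff_iff[of \<phi> x v, OF v] by blast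
    show "\<exists>r>0. \<forall>Z. norm (Z - \<Lambda> a x) < r \<longrightarrow>
        ereal (v + inner (Z - \<Lambda> a x) (\<Lambda> a y) - e * norm (Z - \<Lambda> a x)) \<le> (\<phi> \<circ> \<gamma>) Z"
    proof (intro exI[of _ "r / M"] conjI allI impI)
      show "r / M > 0"
        using r M by simp
    next
      fix Z assume "norm (Z - \<Lambda> a x) < r / M"
      then have "norm (Z - \<Lambda> a x) * M < r"
        using M by (simp add: field_simps)
      then show "ereal (v + inner (Z - \<Lambda> a x) (\<Lambda> a y) - e * norm (Z - \<Lambda> a x)) \<le> (\<phi> \<circ> \<gamma>) Z"
        using comp_gamma_lower_bound[OF a e M_def near] vX by (cases "Z = \<Lambda> a x") simp_all
    qed
  qed
qed

lemma frechet_subdiff_of_comp_gamma_Lambda: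
  assumes a: "a \<in> A" and Y: "\<Lambda> a y \<in> frechet_subdiff (\<phi> \<circ> \<gamma>) (\<Lambda> a x)"
  shows "y \<in> frechet_subdiff \<phi> x"
proof -
  have "(\<phi> \<circ> \<gamma>) \<circ> \<Lambda> a = \<phi>"
    by (simp add: fun_eq_iff phi_gamma_Lambda[OF a])
  moreover have "y \<in> frechet_subdiff ((\<phi> \<circ> \<gamma>) \<circ> \<Lambda> a) x"
    by (rule frechet_subdiff_comp_linear_isometry[OF Lambda_isometry[OF a] Y])
  ultimately show ?thesis
    by (simp only:)
qed

lemma frechet_subdiff_comp_gamma_shift:
  assumes Y: "Y \<in> frechet_subdiff (\<phi> \<circ> \<gamma>) X"
    and t: "\<And>n. t n > 0" "t \<longlonglongrightarrow> 0" and c: "\<And>n. c n \<in> A"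
    and dec: "\<And>n. X + t n *\<^sub>R Y = \<Lambda> (c n) (\<gamma> (X + t n *\<^sub>R Y))"
  shows "(\<lambda>n. norm (\<Lambda> (c n) (\<gamma> X) - X) / t n) \<longlonglongrightarrow> 0"
proof (rule tendstoI)
  fix e :: real assume e: "e > 0"
  obtain v where v: "(\<phi> \<circ> \<gamma>) X = ereal v"
    using Y by (rule frechet_subdiff_finite)
  have "e / 4 > 0"
    using e by simp
  then obtain r where r: "r > 0" and near: "\<And>Z. norm (Z - X) < r \<Longrightarrow>
      ereal (v + inner (Z - X) Y - e / 4 * norm (Z - X)) \<le> (\<phi> \<circ> \<gamma>) Z"
    using Y unfolding frechet_subdiff_iff[of "\<phi> \<circ> \<gamma>" X v, OF v] by blast
  have "(\<lambda>n. 2 * t n * norm Y) \<longlonglongrightarrow> 2 * 0 * norm Y"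
    by (intro tendsto_intros t(2))
  then have "\<forall>\<^sub>F n in sequentially. 2 * t n * norm Y < r"
    using r by (simp add: order_tendstoD(2))
  then show "\<forall>\<^sub>F n in sequentially. dist (norm (\<Lambda> (c n) (\<gamma> X) - X) / t n) 0 < e"
  proof (rule eventually_mono)
    fix n assume small: "2 * t n * norm Y < r"
    define d where "d = norm (\<Lambda> (c n) (\<gamma> X) - X)"
    have tn: "t n \<ge> 0"
      using t(1) less_imp_le by blast
    note shift = Lambda_gamma_shift_le[OF c tn dec]
    have "ereal (v + inner (\<Lambda> (c n) (\<gamma> X) - X) Y - e / 4 * d) \<le> (\<phi> \<circ> \<gamma>) (\<Lambda> (c n) (\<gamma> X))"
      using near shift(2) small by (simp add: d_def)
    moreover have "(\<phi> \<circ> \<gamma>) (\<Lambda> (c n) (\<gamma> X)) = ereal v"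
      using v by (simp add: phi_gamma_Lambda[OF c])
    ultimately have "inner (\<Lambda> (c n) (\<gamma> X) - X) Y \<le> e / 4 * d"
      by simp
    with shift(1) tn have "d\<^sup>2 \<le> (e / 2 * t n) * d"
      using mult_left_mono[of _ _ "2 * t n"] by (fastforce simp: d_def mult_ac)
    then have "d \<le> e / 2 * t n"
      by (rule square_le_mult_imp_le) (use e tn in simp)
    then have "d / t n \<le> e / 2"
      using t(1)[of n] by (simp add: pos_divide_le_eq)
    moreover have "0 \<le> d / t n"
      using t(1)[of n] by (simp add: d_def)
    ultimately show "dist (d / t n) 0 < e"
      using e unfolding dist_real_def by (simp only: diff_zero abs_of_nonneg)
  qed
qed

lemma frechet_subdiff_comp_gamma_approx:
  assumes Y: "Y \<in> frechet_subdiff (\<phi> \<circ> \<gamma>) X"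
  obtains c xs u where "\<And>n. c n \<in> A" "\<And>n. xs n = \<Lambda> (c n) (\<gamma> (xs n))" "xs \<longlonglongrightarrow> X"
    "\<And>n. norm (u n) \<le> norm Y" "(\<lambda>n. \<Lambda> (c n) (u n)) \<longlonglongrightarrow> Y"
proof -
  define t where "t n = inverse (real (Suc n))" for n
  have t_pos: "t n > 0" for n
    by (simp add: t_def)
  have t_lim: "t \<longlonglongrightarrow> 0"
    unfolding t_def by (rule LIMSEQ_inverse_real_of_nat)
  define xs where "xs n = X + t n *\<^sub>R Y" for n
  have "\<exists>c. \<forall>n. c n \<in> A \<and> xs n = \<Lambda> (c n) (\<gamma> (xs n))"
    using Lambda_gamma by (intro choice) blast
  then obtain c where c: "\<And>n. c n \<in> A" and dec: "\<And>n. xs n = \<Lambda> (c n) (\<gamma> (xs n))"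
    by blast
  define u where "u n = inverse (t n) *\<^sub>R (\<gamma> (xs n) - \<gamma> X)" for n
  show ?thesis
  proof (rule that[OF c dec])
    have "(\<lambda>n. X + t n *\<^sub>R Y) \<longlonglongrightarrow> X + 0 *\<^sub>R Y"
      by (intro tendsto_intros t_lim)
    then show "xs \<longlonglongrightarrow> X"
      by (simp add: xs_def[abs_def])
  next
    fix n
    have "norm (u n) = norm (\<gamma> (xs n) - \<gamma> X) / t n"
      using t_pos[of n] by (simp add: u_def divide_inverse mult.commute)
    also have "\<dots> \<le> norm Y"
      using gamma_lipschitz[of "xs n" X] t_pos[of n] by (simp add: xs_def pos_divide_le_eq mult.commute)
    finally show "norm (u n) \<le> norm Y" .
  next
    have "norm (\<Lambda> (c n) (u n) - Y) = norm (\<Lambda> (c n) (\<gamma> X) - X) / t n" for n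
      using Lambda_difference_quotient[OF c, of "t n" X Y] dec[of n] t_pos[of n]
      by (simp add: u_def xs_def)
    moreover have "(\<lambda>n. norm (\<Lambda> (c n) (\<gamma> X) - X) / t n) \<longlonglongrightarrow> 0"
      using frechet_subdiff_comp_gamma_shift[OF Y t_pos t_lim c] dec by (simp add: xs_def)
    ultimately have "(\<lambda>n. norm (\<Lambda> (c n) (u n) - Y)) \<longlonglongrightarrow> 0"
      by simp
    then show "(\<lambda>n. \<Lambda> (c n) (u n)) \<longlonglongrightarrow> Y"
      by (simp only: tendsto_norm_zero_iff LIM_zero_iff)
  qed
qed

lemma frechet_subdiff_comp_gammaE:
  assumes cl: "closed ((\<lambda>a. Blinfun (\<Lambda> a)) ` A)" and Y: "Y \<in> frechet_subdiff (\<phi> \<circ> \<gamma>) X"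
  obtains a y where "a \<in> A" "X = \<Lambda> a (\<gamma> X)" "y \<in> frechet_subdiff \<phi> (\<gamma> X)" "Y = \<Lambda> a y"
proof -
  obtain c xs u where c: "\<And>n. c n \<in> A" and dec: "\<And>n. xs n = \<Lambda> (c n) (\<gamma> (xs n))"
    and xs: "xs \<longlonglongrightarrow> X" and u: "\<And>n. norm (u n) \<le> norm Y" and lim: "(\<lambda>n. \<Lambda> (c n) (u n)) \<longlonglongrightarrow> Y"
    using frechet_subdiff_comp_gamma_approx[OF Y] by blast
  obtain a y where a: "a \<in> A" and X: "X = \<Lambda> a (\<gamma> X)" and Yy: "Y = \<Lambda> a y"
    using Lambda_decomposition_limit[OF cl c dec xs u lim] by blast
  have "\<Lambda> a y \<in> frechet_subdiff (\<phi> \<circ> \<gamma>) (\<Lambda> a (\<gamma> X))"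
    using Y by (simp only: Yy[symmetric] X[symmetric])
  then have "y \<in> frechet_subdiff \<phi> (\<gamma> X)"
    by (rule frechet_subdiff_of_comp_gamma_Lambda[OF a])
  with a X Yy show thesis
    using that by blast
qed

lemma limiting_subdiff_comp_gamma_Lambda:
  assumes a: "a \<in> A" and y: "y \<in> limiting_subdiff \<phi> x"
  shows "\<Lambda> a y \<in> limiting_subdiff (\<phi> \<circ> \<gamma>) (\<Lambda> a x)"
proof -
  obtain xs ys where fin: "\<bar>\<phi> x\<bar> \<noteq> \<infinity>" and xs: "xs \<longlonglongrightarrow> x" and fx: "(\<lambda>n. \<phi> (xs n)) \<longlonglongrightarrow> \<phi> x"
    and ys: "ys \<longlonglongrightarrow> y" and F: "\<And>n. ys n \<in> frechet_subdiff \<phi> (xs n)"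
    using limiting_subdiffE[OF y] by blast
  have La: "bounded_linear (\<Lambda> a)"
    using Lambda_linear[OF a] by (simp add: linear_conv_bounded_linear)
  show ?thesis
  proof (rule limiting_subdiffI[where xs = "\<lambda>n. \<Lambda> a (xs n)" and ys = "\<lambda>n. \<Lambda> a (ys n)"])
    show "\<bar>(\<phi> \<circ> \<gamma>) (\<Lambda> a x)\<bar> \<noteq> \<infinity>"
      using fin by (simp add: phi_gamma_Lambda[OF a])
    show "(\<lambda>n. \<Lambda> a (xs n)) \<longlonglongrightarrow> \<Lambda> a x"
      using bounded_linear.tendsto[OF La xs] .
    show "(\<lambda>n. (\<phi> \<circ> \<gamma>) (\<Lambda> a (xs n))) \<longlonglongrightarrow> (\<phi> \<circ> \<gamma>) (\<Lambda> a x)"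
      using fx by (simp add: phi_gamma_Lambda[OF a])
    show "(\<lambda>n. \<Lambda> a (ys n)) \<longlonglongrightarrow> \<Lambda> a y"
      using bounded_linear.tendsto[OF La ys] .
    show "\<Lambda> a (ys n) \<in> frechet_subdiff (\<phi> \<circ> \<gamma>) (\<Lambda> a (xs n))" for n
      by (rule frechet_subdiff_comp_gamma_Lambda[OF a F])
  qed
qed

lemma limiting_subdiff_comp_gammaE:
  assumes cl: "closed ((\<lambda>a. Blinfun (\<Lambda> a)) ` A)" and Y: "Y \<in> limiting_subdiff (\<phi> \<circ> \<gamma>) X"
  obtains a y where "a \<in> A" "X = \<Lambda> a (\<gamma> X)" "y \<in> limiting_subdiff \<phi> (\<gamma> X)" "Y = \<Lambda> a y"
proof -
  obtain xs ys where fin: "\<bar>(\<phi> \<circ> \<gamma>) X\<bar> \<noteq> \<infinity>" and xs: "xs \<longlonglongrightarrow> X"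
    and fx: "(\<lambda>n. (\<phi> \<circ> \<gamma>) (xs n)) \<longlonglongrightarrow> (\<phi> \<circ> \<gamma>) X"
    and ys: "ys \<longlonglongrightarrow> Y" and F: "\<And>n. ys n \<in> frechet_subdiff (\<phi> \<circ> \<gamma>) (xs n)"
    using limiting_subdiffE[OF Y] by blast
  have "\<forall>n. \<exists>a y. a \<in> A \<and> xs n = \<Lambda> a (\<gamma> (xs n)) \<and> y \<in> frechet_subdiff \<phi> (\<gamma> (xs n)) \<and> ys n = \<Lambda> a y"
    using frechet_subdiff_comp_gammaE[OF cl F] by metis
  then obtain c u where c: "\<And>n. c n \<in> A" and dec: "\<And>n. xs n = \<Lambda> (c n) (\<gamma> (xs n))"
    and u: "\<And>n. u n \<in> frechet_subdiff \<phi> (\<gamma> (xs n))" and ys_eq: "\<And>n. ys n = \<Lambda> (c n) (u n)"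
    by metis
  obtain B where B: "\<And>n. norm (ys n) \<le> B"
    using convergent_imp_Bseq[OF convergentI[OF ys]] unfolding Bseq_def by blast
  have u_bound: "norm (u n) \<le> B" for n
    using B[of n] by (simp add: ys_eq norm_Lambda[OF c])
  have "(\<lambda>n. \<Lambda> (c n) (u n)) \<longlonglongrightarrow> Y"
    using ys by (simp add: ys_eq[symmetric])
  then obtain r a y where r: "strict_mono r" and a: "a \<in> A" and X: "X = \<Lambda> a (\<gamma> X)"
    and Yy: "Y = \<Lambda> a y" and uy: "(\<lambda>n. u (r n)) \<longlonglongrightarrow> y"
    by (rule Lambda_decomposition_limit[OF cl c dec xs u_bound])
  have xr: "(\<lambda>n. xs (r n)) \<longlonglongrightarrow> X"
    using LIMSEQ_subseq_LIMSEQ[OF xs r] by (simp add: o_def)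
  have "y \<in> limiting_subdiff \<phi> (\<gamma> X)"
  proof (rule limiting_subdiffI[where xs = "\<lambda>n. \<gamma> (xs (r n))" and ys = "\<lambda>n. u (r n)"])
    show "\<bar>\<phi> (\<gamma> X)\<bar> \<noteq> \<infinity>"
      using fin by simp
    show "(\<lambda>n. \<gamma> (xs (r n))) \<longlonglongrightarrow> \<gamma> X"
      by (rule tendsto_gamma[OF xr])
    show "(\<lambda>n. \<phi> (\<gamma> (xs (r n)))) \<longlonglongrightarrow> \<phi> (\<gamma> X)"
      using LIMSEQ_subseq_LIMSEQ[OF fx r] by (simp add: o_def)
    show "(\<lambda>n. u (r n)) \<longlonglongrightarrow> y"
      by (rule uy)
    show "u (r n) \<in> frechet_subdiff \<phi> (\<gamma> (xs (r n)))" for n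
      by (rule u)
  qed
  with a X Yy show thesis
    using that by blast
qed

lemma frechet_subdiff_comp_gamma:
  assumes cl: "closed ((\<lambda>a. Blinfun (\<Lambda> a)) ` A)"
  shows "frechet_subdiff (\<phi> \<circ> \<gamma>) X =
    {\<Lambda> a y | a y. y \<in> frechet_subdiff \<phi> (\<gamma> X) \<and> a \<in> index_set_at A \<Lambda> \<gamma> X}"
proof (intro equalityI subsetI)
  fix Y assume "Y \<in> frechet_subdiff (\<phi> \<circ> \<gamma>) X"
  then obtain a y where "a \<in> A" "X = \<Lambda> a (\<gamma> X)" "y \<in> frechet_subdiff \<phi> (\<gamma> X)" "Y = \<Lambda> a y"
    by (rule frechet_subdiff_comp_gammaE[OF cl])
  then show "Y \<in> {\<Lambda> a y | a y. y \<in> frechet_subdiff \<phi> (\<gamma> X) \<and> a \<in> index_set_at A \<Lambda> \<gamma> X}"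
    unfolding index_set_at_def by blast
next
  fix Y assume "Y \<in> {\<Lambda> a y | a y. y \<in> frechet_subdiff \<phi> (\<gamma> X) \<and> a \<in> index_set_at A \<Lambda> \<gamma> X}"
  then obtain a y where a: "a \<in> A" and X: "X = \<Lambda> a (\<gamma> X)"
    and "y \<in> frechet_subdiff \<phi> (\<gamma> X)" and "Y = \<Lambda> a y"
    unfolding index_set_at_def by blast
  then show "Y \<in> frechet_subdiff (\<phi> \<circ> \<gamma>) X"
    using frechet_subdiff_comp_gamma_Lambda[OF a, of y "\<gamma> X"] by (simp only: X[symmetric])
qed

lemma limiting_subdiff_comp_gamma:
  assumes cl: "closed ((\<lambda>a. Blinfun (\<Lambda> a)) ` A)"
  shows "limiting_subdiff (\<phi> \<circ> \<gamma>) X =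
    {\<Lambda> a y | a y. y \<in> limiting_subdiff \<phi> (\<gamma> X) \<and> a \<in> index_set_at A \<Lambda> \<gamma> X}"
proof (intro equalityI subsetI)
  fix Y assume "Y \<in> limiting_subdiff (\<phi> \<circ> \<gamma>) X"
  then obtain a y where "a \<in> A" "X = \<Lambda> a (\<gamma> X)" "y \<in> limiting_subdiff \<phi> (\<gamma> X)" "Y = \<Lambda> a y"
    by (rule limiting_subdiff_comp_gammaE[OF cl])
  then show "Y \<in> {\<Lambda> a y | a y. y \<in> limiting_subdiff \<phi> (\<gamma> X) \<and> a \<in> index_set_at A \<Lambda> \<gamma> X}"
    unfolding index_set_at_def by blast
next
  fix Y assume "Y \<in> {\<Lambda> a y | a y. y \<in> limiting_subdiff \<phi> (\<gamma> X) \<and> a \<in> index_set_at A \<Lambda> \<gamma> X}"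
  then obtain a y where a: "a \<in> A" and X: "X = \<Lambda> a (\<gamma> X)"
    and "y \<in> limiting_subdiff \<phi> (\<gamma> X)" and "Y = \<Lambda> a y"
    unfolding index_set_at_def by blast
  then show "Y \<in> limiting_subdiff (\<phi> \<circ> \<gamma>) X"
    using limiting_subdiff_comp_gamma_Lambda[OF a, of y "\<gamma> X"] by (simp only: X[symmetric])
qed

end

theorem theorem4p1:
  fixes G :: "('s, 'm) monoid_scheme"
    and act :: "'s \<Rightarrow> 'x::euclidean_space \<Rightarrow> 'x"
    and \<gamma> :: "'h::euclidean_space \<Rightarrow> 'x"
    and A :: "'i set"
    and \<Lambda> :: "'i \<Rightarrow> 'x \<Rightarrow> 'h"
    and \<phi> :: "'x \<Rightarrow> ereal"
    and X :: 'h
  assumes sds: "spectral_decomposition_system G act \<gamma> A \<Lambda>"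
    and closed_Lambda: "closed ((\<lambda>a. Blinfun (\<Lambda> a)) ` A)"
    and inv: "S_invariant G act \<phi>"
  shows "(frechet_subdiff (\<phi> \<circ> \<gamma>) X =
           {\<Lambda> a y | a y. y \<in> frechet_subdiff \<phi> (\<gamma> X) \<and> a \<in> index_set_at A \<Lambda> \<gamma> X})
       \<and> (limiting_subdiff (\<phi> \<circ> \<gamma>) X =
           {\<Lambda> a y | a y. y \<in> limiting_subdiff \<phi> (\<gamma> X) \<and> a \<in> index_set_at A \<Lambda> \<gamma> X})"
proof -
  obtain \<tau> where "spectral_decomposition G act \<gamma> A \<Lambda> \<tau>"
    using sds by (rule spectral_decomposition_systemE)
  then interpret spectral_function G act \<gamma> A \<Lambda> \<tau> \<phi>
    using inv by (simp add: spectral_function_def spectral_function_axioms_def S_invariant_def)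
  show ?thesis
    using frechet_subdiff_comp_gamma[OF closed_Lambda] limiting_subdiff_comp_gamma[OF closed_Lambda]
    by blast
qed

end
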